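(* Every lens that is both an epimorphism and a monomorphism in $\mathbf{Lens}$ is an isomorphism in $\mathbf{Lens}$.
   Context: A lens $F\colon \mathbf{A}\to\mathbf{B}$ between small categories consists of a functor $F\colon\mathbf{A}\to\mathbf{B}$ (the get functor) together with, for each object $A$ of $\mathbf{A}$, a function $\varphi_{F,A}$ from the set of morphisms of $\mathbf{B}$ with domain $FA$ to the set of morphisms of $\mathbf{A}$ with domain $A$, such that: $F(\varphi_{F,A}b)=b$; $\varphi_{F,A}(\mathrm{id}_{FA})=\mathrm{id}_A$; and $\varphi_{F,A}(b'\circ b)=\varphi_{F,A'}(b')\circ\varphi_{F,A}(b)$ whenever $b$ has domain $FA$, $A'$ is the codomain of $\varphi_{F,A}b$, and $b'$ has domain $FA'$. $\mathbf{Lens}$ is the category of small categories and lenses, with composite of $F\colon\mathbf{A}\to\mathbf{B}$, $G\colon\mathbf{B}\to\mathbf{C}$ having get functor $G\circ F$ and puts $\varphi_{G\circ F,A}(c)=\varphi_{F,A}(\varphi_{G,FA}(c))$. *)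

theory Defs
  imports Main
begin

record ('o, 'm) cat =
  cat_obj  :: "'o set"
  cat_mor  :: "'m set"
  cat_dom  :: "'m \<Rightarrow> 'o"
  cat_cod  :: "'m \<Rightarrow> 'o"
  cat_id   :: "'o \<Rightarrow> 'm"
  cat_comp :: "'m \<Rightarrow> 'm \<Rightarrow> 'm"   (* cat_comp C g f = g o f *)

definition category :: "('o, 'm) cat \<Rightarrow> bool" where
  "category C \<longleftrightarrow>
     (\<forall>f\<in>cat_mor C. cat_dom C f \<in> cat_obj C \<and> cat_cod C f \<in> cat_obj C) \<and>
     (\<forall>x\<in>cat_obj C. cat_id C x \<in> cat_mor C \<and> cat_dom C (cat_id C x) = x \<and> cat_cod C (cat_id C x) = x) \<and>
     (\<forall>f\<in>cat_mor C. \<forall>g\<in>cat_mor C. cat_cod C f = cat_dom C g \<longrightarrow>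
        cat_comp C g f \<in> cat_mor C \<and> cat_dom C (cat_comp C g f) = cat_dom C f \<and>
        cat_cod C (cat_comp C g f) = cat_cod C g) \<and>
     (\<forall>f\<in>cat_mor C. cat_comp C (cat_id C (cat_cod C f)) f = f \<and> cat_comp C f (cat_id C (cat_dom C f)) = f) \<and>
     (\<forall>f\<in>cat_mor C. \<forall>g\<in>cat_mor C. \<forall>h\<in>cat_mor C. cat_cod C f = cat_dom C g \<longrightarrow> cat_cod C g = cat_dom C h \<longrightarrow>
        cat_comp C h (cat_comp C g f) = cat_comp C (cat_comp C h g) f)"

record ('ao, 'am, 'bo, 'bm) lens =
  get_obj :: "'ao \<Rightarrow> 'bo"
  get_mor :: "'am \<Rightarrow> 'bm"
  put     :: "'ao \<Rightarrow> 'bm \<Rightarrow> 'am"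

definition is_functor :: "('ao, 'am) cat \<Rightarrow> ('bo, 'bm) cat \<Rightarrow> ('ao, 'am, 'bo, 'bm) lens \<Rightarrow> bool" where
  "is_functor A B F \<longleftrightarrow>
     (\<forall>x\<in>cat_obj A. get_obj F x \<in> cat_obj B) \<and>
     (\<forall>f\<in>cat_mor A. get_mor F f \<in> cat_mor B \<and>
        cat_dom B (get_mor F f) = get_obj F (cat_dom A f) \<and>
        cat_cod B (get_mor F f) = get_obj F (cat_cod A f)) \<and>
     (\<forall>x\<in>cat_obj A. get_mor F (cat_id A x) = cat_id B (get_obj F x)) \<and>
     (\<forall>f\<in>cat_mor A. \<forall>g\<in>cat_mor A. cat_cod A f = cat_dom A g \<longrightarrow>
        get_mor F (cat_comp A g f) = cat_comp B (get_mor F g) (get_mor F f))"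

definition is_lens :: "('ao, 'am) cat \<Rightarrow> ('bo, 'bm) cat \<Rightarrow> ('ao, 'am, 'bo, 'bm) lens \<Rightarrow> bool" where
  "is_lens A B F \<longleftrightarrow> category A \<and> category B \<and> is_functor A B F \<and>
     (\<forall>x\<in>cat_obj A. \<forall>b\<in>cat_mor B. cat_dom B b = get_obj F x \<longrightarrow>
        put F x b \<in> cat_mor A \<and> cat_dom A (put F x b) = x \<and> get_mor F (put F x b) = b) \<and>
     (\<forall>x\<in>cat_obj A. put F x (cat_id B (get_obj F x)) = cat_id A x) \<and>
     (\<forall>x\<in>cat_obj A. \<forall>b\<in>cat_mor B. \<forall>b'\<in>cat_mor B.
        cat_dom B b = get_obj F x \<longrightarrow> cat_dom B b' = get_obj F (cat_cod A (put F x b)) \<longrightarrow>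
        put F x (cat_comp B b' b) = cat_comp A (put F (cat_cod A (put F x b)) b') (put F x b))"

definition lens_comp :: "('bo, 'bm, 'co, 'cm) lens \<Rightarrow> ('ao, 'am, 'bo, 'bm) lens \<Rightarrow> ('ao, 'am, 'co, 'cm) lens" where
  "lens_comp G F = \<lparr> get_obj = get_obj G \<circ> get_obj F, get_mor = get_mor G \<circ> get_mor F,
                     put = (\<lambda>x c. put F x (put G (get_obj F x) c)) \<rparr>"

definition id_lens :: "('o, 'm, 'o, 'm) lens" where
  "id_lens = \<lparr> get_obj = (\<lambda>x. x), get_mor = (\<lambda>f. f), put = (\<lambda>x b. b) \<rparr>"

text \<open>Equality of lenses A -> B (as morphisms of Lens): agreement on the carriers.\<close>

definition lens_eq :: "('ao, 'am) cat \<Rightarrow> ('bo, 'bm) cat \<Rightarrow> ('ao, 'am, 'bo, 'bm) lens \<Rightarrow> ('ao, 'am, 'bo, 'bm) lens \<Rightarrow> bool" where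
  "lens_eq A B F G \<longleftrightarrow>
     (\<forall>x\<in>cat_obj A. get_obj F x = get_obj G x) \<and>
     (\<forall>f\<in>cat_mor A. get_mor F f = get_mor G f) \<and>
     (\<forall>x\<in>cat_obj A. \<forall>b\<in>cat_mor B. cat_dom B b = get_obj F x \<longrightarrow> put F x b = put G x b)"

text \<open>Test categories range over a fixed universe type, large relative to A and B
  (HOL cannot quantify over types inside a formula).\<close>

type_synonym ('ao, 'am, 'bo, 'bm) univ = "(nat + 'ao + 'am + 'bo + 'bm) list set"

definition lens_epi :: "('ao, 'am) cat \<Rightarrow> ('bo, 'bm) cat \<Rightarrow> ('ao, 'am, 'bo, 'bm) lens \<Rightarrow> bool" where
  "lens_epi A B F \<longleftrightarrow> is_lens A B F \<and>
     (\<forall>(C :: (('ao, 'am, 'bo, 'bm) univ, ('ao, 'am, 'bo, 'bm) univ) cat) G H.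
        is_lens B C G \<longrightarrow> is_lens B C H \<longrightarrow>
        lens_eq A C (lens_comp G F) (lens_comp H F) \<longrightarrow> lens_eq B C G H)"

definition lens_mono :: "('ao, 'am) cat \<Rightarrow> ('bo, 'bm) cat \<Rightarrow> ('ao, 'am, 'bo, 'bm) lens \<Rightarrow> bool" where
  "lens_mono A B F \<longleftrightarrow> is_lens A B F \<and>
     (\<forall>(X :: (('ao, 'am, 'bo, 'bm) univ, ('ao, 'am, 'bo, 'bm) univ) cat) G H.
        is_lens X A G \<longrightarrow> is_lens X A H \<longrightarrow>
        lens_eq X B (lens_comp F G) (lens_comp F H) \<longrightarrow> lens_eq X A G H)"

definition lens_iso :: "('ao, 'am) cat \<Rightarrow> ('bo, 'bm) cat \<Rightarrow> ('ao, 'am, 'bo, 'bm) lens \<Rightarrow> bool" where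
  "lens_iso A B F \<longleftrightarrow> is_lens A B F \<and>
     (\<exists>G. is_lens B A G \<and> lens_eq A A (lens_comp G F) id_lens \<and> lens_eq B B (lens_comp F G) id_lens)"

end

theory Submission
  imports Defs
begin

(* A monomorphism F of Lens is injective on objects and on morphisms: the two projections out of
   its kernel pair (pairs of objects, resp. morphisms, with equal images under F) are lenses, the
   put of each one lifting into the other component along F, and F equalizes them.
   An epimorphism is surjective on objects: the image I of F on objects is closed under
   codomains, because morphisms out of it lift to A; doubling the objects of B outside I gives
   two lenses out of B that F coequalizes, and they agree only if no object lies outside I.
   Finally, a lens that is bijective on objects and injective on morphisms is inverted by the
   lens sending b to its unique lift put F (F^-1 (dom b)) b, whose put is the get of F. *)

lemma
  assumes "category C"
  shows cat_dom_in_obj: "f \<in> cat_mor C \<Longrightarrow> cat_dom C f \<in> cat_obj C"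
    and cat_cod_in_obj: "f \<in> cat_mor C \<Longrightarrow> cat_cod C f \<in> cat_obj C"
    and cat_id_in_mor: "x \<in> cat_obj C \<Longrightarrow> cat_id C x \<in> cat_mor C"
    and cat_dom_id: "x \<in> cat_obj C \<Longrightarrow> cat_dom C (cat_id C x) = x"
    and cat_comp_in_mor: "\<lbrakk>f \<in> cat_mor C; g \<in> cat_mor C; cat_cod C f = cat_dom C g\<rbrakk> \<Longrightarrow>
        cat_comp C g f \<in> cat_mor C"
    and cat_dom_comp: "\<lbrakk>f \<in> cat_mor C; g \<in> cat_mor C; cat_cod C f = cat_dom C g\<rbrakk> \<Longrightarrow>
        cat_dom C (cat_comp C g f) = cat_dom C f"
    and cat_cod_comp: "\<lbrakk>f \<in> cat_mor C; g \<in> cat_mor C; cat_cod C f = cat_dom C g\<rbrakk> \<Longrightarrow>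
        cat_cod C (cat_comp C g f) = cat_cod C g"
  using assms unfolding category_def by blast+

lemma
  assumes "is_lens A B F"
  shows lens_category_dom: "category A"
    and lens_category_cod: "category B"
    and lens_get_obj_in_obj: "x \<in> cat_obj A \<Longrightarrow> get_obj F x \<in> cat_obj B"
    and lens_get_mor_in_mor: "f \<in> cat_mor A \<Longrightarrow> get_mor F f \<in> cat_mor B"
    and lens_dom_get_mor: "f \<in> cat_mor A \<Longrightarrow>
        cat_dom B (get_mor F f) = get_obj F (cat_dom A f)"
    and lens_cod_get_mor: "f \<in> cat_mor A \<Longrightarrow>
        cat_cod B (get_mor F f) = get_obj F (cat_cod A f)"
    and lens_get_mor_id: "x \<in> cat_obj A \<Longrightarrow>
        get_mor F (cat_id A x) = cat_id B (get_obj F x)"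
    and lens_get_mor_comp: "\<lbrakk>f \<in> cat_mor A; g \<in> cat_mor A; cat_cod A f = cat_dom A g\<rbrakk> \<Longrightarrow>
        get_mor F (cat_comp A g f) = cat_comp B (get_mor F g) (get_mor F f)"
    and lens_put_in_mor: "\<lbrakk>x \<in> cat_obj A; b \<in> cat_mor B; cat_dom B b = get_obj F x\<rbrakk> \<Longrightarrow>
        put F x b \<in> cat_mor A"
    and lens_dom_put: "\<lbrakk>x \<in> cat_obj A; b \<in> cat_mor B; cat_dom B b = get_obj F x\<rbrakk> \<Longrightarrow>
        cat_dom A (put F x b) = x"
    and lens_get_put: "\<lbrakk>x \<in> cat_obj A; b \<in> cat_mor B; cat_dom B b = get_obj F x\<rbrakk> \<Longrightarrow>
        get_mor F (put F x b) = b"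
    and lens_put_id: "x \<in> cat_obj A \<Longrightarrow> put F x (cat_id B (get_obj F x)) = cat_id A x"
    and lens_put_comp: "\<lbrakk>x \<in> cat_obj A; b \<in> cat_mor B; b' \<in> cat_mor B; cat_dom B b = get_obj F x;
        cat_dom B b' = get_obj F (cat_cod A (put F x b))\<rbrakk> \<Longrightarrow>
        put F x (cat_comp B b' b) = cat_comp A (put F (cat_cod A (put F x b)) b') (put F x b)"
  using assms unfolding is_lens_def is_functor_def by blast+

lemma
  assumes "is_lens A B F" "x \<in> cat_obj A" "b \<in> cat_mor B" "cat_dom B b = get_obj F x"
  shows lens_cod_put_in_obj: "cat_cod A (put F x b) \<in> cat_obj A"
    and lens_get_obj_cod_put: "get_obj F (cat_cod A (put F x b)) = cat_cod B b"
  using assms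
  by (metis cat_cod_in_obj lens_category_dom lens_put_in_mor,
      metis lens_cod_get_mor lens_get_put lens_put_in_mor)

(* lens_epi and lens_mono only test against categories in a fixed universe type; transporting
   along injective encodings makes every category that can be encoded there usable as a test. *)

definition transport_cat :: "('o \<Rightarrow> 'u) \<Rightarrow> ('m \<Rightarrow> 'v) \<Rightarrow> ('o, 'm) cat \<Rightarrow> ('u, 'v) cat" where
  "transport_cat eo em D = \<lparr> cat_obj = eo ` cat_obj D, cat_mor = em ` cat_mor D,
     cat_dom = (\<lambda>g. eo (cat_dom D (inv em g))), cat_cod = (\<lambda>g. eo (cat_cod D (inv em g))),
     cat_id = (\<lambda>x. em (cat_id D (inv eo x))),
     cat_comp = (\<lambda>g f. em (cat_comp D (inv em g) (inv em f))) \<rparr>"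

definition transport_lens_dom ::
    "('o \<Rightarrow> 'u) \<Rightarrow> ('m \<Rightarrow> 'v) \<Rightarrow> ('o, 'm, 'ao, 'am) lens \<Rightarrow> ('u, 'v, 'ao, 'am) lens" where
  "transport_lens_dom eo em L = \<lparr> get_obj = get_obj L \<circ> inv eo, get_mor = get_mor L \<circ> inv em,
     put = (\<lambda>x a. em (put L (inv eo x) a)) \<rparr>"

definition transport_lens_cod ::
    "('o \<Rightarrow> 'u) \<Rightarrow> ('m \<Rightarrow> 'v) \<Rightarrow> ('bo, 'bm, 'o, 'm) lens \<Rightarrow> ('bo, 'bm, 'u, 'v) lens" where
  "transport_lens_cod eo em L = \<lparr> get_obj = eo \<circ> get_obj L, get_mor = em \<circ> get_mor L,
     put = (\<lambda>y c. put L y (inv em c)) \<rparr>"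

lemma category_transport_cat:
  assumes "inj eo" "inj em" "category D"
  shows "category (transport_cat eo em D)"
  using assms unfolding category_def transport_cat_def
  by (simp add: inj_eq)

lemma is_lens_transport_lens_dom:
  assumes "inj eo" "inj em" "is_lens D A L"
  shows "is_lens (transport_cat eo em D) A (transport_lens_dom eo em L)"
  using assms category_transport_cat[OF assms(1,2)]
  unfolding is_lens_def is_functor_def transport_cat_def transport_lens_dom_def
  by (simp add: inj_eq)

lemma is_lens_transport_lens_cod:
  assumes "inj eo" "inj em" "is_lens B D L"
  shows "is_lens B (transport_cat eo em D) (transport_lens_cod eo em L)"
  using assms category_transport_cat[OF assms(1,2)]
  unfolding is_lens_def is_functor_def transport_cat_def transport_lens_cod_def
  by (auto simp add: inj_eq)

lemma lens_comp_transport_lens_dom: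
  "lens_comp F (transport_lens_dom eo em G) = transport_lens_dom eo em (lens_comp F G)"
  by (simp add: lens_comp_def transport_lens_dom_def comp_assoc)

lemma lens_comp_transport_lens_cod:
  "lens_comp (transport_lens_cod eo em G) F = transport_lens_cod eo em (lens_comp G F)"
  by (simp add: lens_comp_def transport_lens_cod_def comp_assoc)

lemma lens_eq_transport_lens_dom_iff:
  assumes "inj eo" "inj em"
  shows "lens_eq (transport_cat eo em X) C
           (transport_lens_dom eo em G) (transport_lens_dom eo em H) \<longleftrightarrow> lens_eq X C G H"
  using assms unfolding lens_eq_def transport_cat_def transport_lens_dom_def
  by (auto simp: inj_eq)

lemma lens_eq_transport_lens_cod_iff:
  assumes "inj eo" "inj em"
  shows "lens_eq X (transport_cat eo em D)
           (transport_lens_cod eo em G) (transport_lens_cod eo em H) \<longleftrightarrow> lens_eq X D G H"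
  using assms unfolding lens_eq_def transport_cat_def transport_lens_cod_def
  by (auto simp: inj_eq)

lemma lens_mono_cancel:
  fixes F :: "('ao, 'am, 'bo, 'bm) lens" and X :: "('xo, 'xm) cat"
    and eo :: "'xo \<Rightarrow> ('ao, 'am, 'bo, 'bm) univ"
    and em :: "'xm \<Rightarrow> ('ao, 'am, 'bo, 'bm) univ"
  assumes "lens_mono A B F" "inj eo" "inj em" "is_lens X A G" "is_lens X A H"
    "lens_eq X B (lens_comp F G) (lens_comp F H)"
  shows "lens_eq X A G H"
proof -
  let ?G = "transport_lens_dom eo em G" and ?H = "transport_lens_dom eo em H"
  have "lens_eq (transport_cat eo em X) B (lens_comp F ?G) (lens_comp F ?H)"
    using assms(2,3,6)
    by (simp add: lens_comp_transport_lens_dom lens_eq_transport_lens_dom_iff)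
  then have "lens_eq (transport_cat eo em X) A ?G ?H"
    using assms(1-5) is_lens_transport_lens_dom unfolding lens_mono_def by blast
  then show ?thesis using assms(2,3) by (simp add: lens_eq_transport_lens_dom_iff)
qed

lemma lens_epi_cancel:
  fixes F :: "('ao, 'am, 'bo, 'bm) lens" and C :: "('co, 'cm) cat"
    and eo :: "'co \<Rightarrow> ('ao, 'am, 'bo, 'bm) univ"
    and em :: "'cm \<Rightarrow> ('ao, 'am, 'bo, 'bm) univ"
  assumes "lens_epi A B F" "inj eo" "inj em" "is_lens B C G" "is_lens B C H"
    "lens_eq A C (lens_comp G F) (lens_comp H F)"
  shows "lens_eq B C G H"
proof -
  let ?G = "transport_lens_cod eo em G" and ?H = "transport_lens_cod eo em H"
  have "lens_eq A (transport_cat eo em C) (lens_comp ?G F) (lens_comp ?H F)"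
    using assms(2,3,6)
    by (simp add: lens_comp_transport_lens_cod lens_eq_transport_lens_cod_iff)
  then have "lens_eq B (transport_cat eo em C) ?G ?H"
    using assms(1-5) is_lens_transport_lens_cod unfolding lens_epi_def by blast
  then show ?thesis using assms(2,3) by (simp add: lens_eq_transport_lens_cod_iff)
qed

definition pair_code :: "('a \<Rightarrow> 'c) \<Rightarrow> ('b \<Rightarrow> 'c) \<Rightarrow> 'a \<times> 'b \<Rightarrow> 'c list set" where
  "pair_code f g p = {[f (fst p), g (snd p)]}"

lemma inj_pair_code: "inj f \<Longrightarrow> inj g \<Longrightarrow> inj (pair_code f g)"
  by (auto intro!: injI simp: pair_code_def prod_eq_iff inj_eq)

definition kernel_pair_cat ::
    "('ao, 'am) cat \<Rightarrow> ('ao, 'am, 'bo, 'bm) lens \<Rightarrow> ('ao \<times> 'ao, 'am \<times> 'am) cat" where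
  "kernel_pair_cat A F = \<lparr>
     cat_obj = {(x, x'). x \<in> cat_obj A \<and> x' \<in> cat_obj A \<and> get_obj F x = get_obj F x'},
     cat_mor = {(f, f'). f \<in> cat_mor A \<and> f' \<in> cat_mor A \<and> get_mor F f = get_mor F f'},
     cat_dom = map_prod (cat_dom A) (cat_dom A), cat_cod = map_prod (cat_cod A) (cat_cod A),
     cat_id = map_prod (cat_id A) (cat_id A),
     cat_comp = (\<lambda>(g, g') (f, f'). (cat_comp A g f, cat_comp A g' f')) \<rparr>"

definition kernel_pair_fst ::
    "('ao, 'am, 'bo, 'bm) lens \<Rightarrow> ('ao \<times> 'ao, 'am \<times> 'am, 'ao, 'am) lens" where
  "kernel_pair_fst F = \<lparr> get_obj = fst, get_mor = fst,
     put = (\<lambda>(x, x') f. (f, put F x' (get_mor F f))) \<rparr>"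

definition kernel_pair_snd ::
    "('ao, 'am, 'bo, 'bm) lens \<Rightarrow> ('ao \<times> 'ao, 'am \<times> 'am, 'ao, 'am) lens" where
  "kernel_pair_snd F = \<lparr> get_obj = snd, get_mor = snd,
     put = (\<lambda>(x, x') f. (put F x (get_mor F f), f)) \<rparr>"

lemma category_kernel_pair_cat:
  assumes "is_lens A B F"
  shows "category (kernel_pair_cat A F)"
proof -
  have "category A" "is_functor A B F" using assms by (auto simp: is_lens_def)
  then show ?thesis unfolding category_def kernel_pair_cat_def is_functor_def
    by (auto simp: map_prod_def split_beta) metis+
qed

lemma lens_put_get_mor_comp:
  assumes "is_lens A B F" "x \<in> cat_obj A" "f \<in> cat_mor A" "g \<in> cat_mor A"
    "get_obj F (cat_dom A f) = get_obj F x" "cat_cod A f = cat_dom A g"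
  shows "put F x (get_mor F (cat_comp A g f)) =
         cat_comp A (put F (cat_cod A (put F x (get_mor F f))) (get_mor F g))
           (put F x (get_mor F f))"
  using assms
  by (simp add: lens_get_mor_comp lens_put_comp lens_get_mor_in_mor lens_dom_get_mor
      lens_get_obj_cod_put lens_cod_get_mor)

lemma is_lens_kernel_pair_fst:
  assumes "is_lens A B F"
  shows "is_lens (kernel_pair_cat A F) A (kernel_pair_fst F)"
  using assms category_kernel_pair_cat[OF assms] lens_put_get_mor_comp[OF assms]
  unfolding is_lens_def is_functor_def kernel_pair_cat_def kernel_pair_fst_def
  by auto

lemma is_lens_kernel_pair_snd:
  assumes "is_lens A B F"
  shows "is_lens (kernel_pair_cat A F) A (kernel_pair_snd F)"
  using assms category_kernel_pair_cat[OF assms] lens_put_get_mor_comp[OF assms]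
  unfolding is_lens_def is_functor_def kernel_pair_cat_def kernel_pair_snd_def
  by auto

lemma lens_eq_kernel_pair:
  assumes "is_lens A B F"
  shows "lens_eq (kernel_pair_cat A F) B
           (lens_comp F (kernel_pair_fst F)) (lens_comp F (kernel_pair_snd F))"
  using assms
  by (auto simp: lens_eq_def lens_comp_def kernel_pair_cat_def kernel_pair_fst_def
      kernel_pair_snd_def lens_get_put)

lemma lens_mono_kernel_pair_diagonal:
  fixes A :: "('ao, 'am) cat" and F :: "('ao, 'am, 'bo, 'bm) lens"
  assumes "lens_mono A B F"
  shows "lens_eq (kernel_pair_cat A F) A (kernel_pair_fst F) (kernel_pair_snd F)"
proof -
  have F: "is_lens A B F" using assms by (simp add: lens_mono_def)
  let ?eo = "pair_code (Inr \<circ> Inl) (Inr \<circ> Inl)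
    :: 'ao \<times> 'ao \<Rightarrow> ('ao, 'am, 'bo, 'bm) univ"
  let ?em = "pair_code (Inr \<circ> Inr \<circ> Inl) (Inr \<circ> Inr \<circ> Inl)
    :: 'am \<times> 'am \<Rightarrow> ('ao, 'am, 'bo, 'bm) univ"
  have "inj ?eo" "inj ?em" by (intro inj_pair_code inj_compose inj_Inl inj_Inr)+
  then show ?thesis
    by (rule lens_mono_cancel[OF assms _ _ is_lens_kernel_pair_fst[OF F]
          is_lens_kernel_pair_snd[OF F] lens_eq_kernel_pair[OF F]])
qed

lemma
  assumes "lens_mono A B F"
  shows lens_mono_inj_on_obj: "inj_on (get_obj F) (cat_obj A)"
    and lens_mono_inj_on_mor: "inj_on (get_mor F) (cat_mor A)"
  using lens_mono_kernel_pair_diagonal[OF assms]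
  by (auto intro!: inj_onI
      simp: lens_eq_def kernel_pair_cat_def kernel_pair_fst_def kernel_pair_snd_def)

(* B with a twin (flagged True) of every object outside I. A morphism out of a twin is a twin
   as well, and its codomain loses the flag once it lies in I. *)

definition twin_cat :: "('bo, 'bm) cat \<Rightarrow> 'bo set \<Rightarrow> (bool \<times> 'bo, bool \<times> 'bm) cat" where
  "twin_cat B I = \<lparr>
     cat_obj = {(t, y). y \<in> cat_obj B \<and> (y \<in> I \<longrightarrow> \<not> t)},
     cat_mor = {(t, b). b \<in> cat_mor B \<and> (cat_dom B b \<in> I \<longrightarrow> \<not> t)},
     cat_dom = (\<lambda>(t, b). (t, cat_dom B b)),
     cat_cod = (\<lambda>(t, b). (t \<and> cat_cod B b \<notin> I, cat_cod B b)),
     cat_id = (\<lambda>(t, y). (t, cat_id B y)),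
     cat_comp = (\<lambda>(_, g) (t, f). (t, cat_comp B g f)) \<rparr>"

definition twin_lens ::
    "bool \<Rightarrow> 'bo set \<Rightarrow> ('bo, 'bm) cat \<Rightarrow> ('bo, 'bm, bool \<times> 'bo, bool \<times> 'bm) lens" where
  "twin_lens t I B = \<lparr> get_obj = (\<lambda>y. (t \<and> y \<notin> I, y)),
     get_mor = (\<lambda>b. (t \<and> cat_dom B b \<notin> I, b)), put = (\<lambda>_ c. snd c) \<rparr>"

lemma category_twin_cat:
  assumes "category B" "\<And>b. b \<in> cat_mor B \<Longrightarrow> cat_dom B b \<in> I \<Longrightarrow> cat_cod B b \<in> I"
  shows "category (twin_cat B I)"
  using assms unfolding category_def twin_cat_def by (auto simp: split_beta)

lemma is_lens_twin_lens:
  assumes "category B" "\<And>b. b \<in> cat_mor B \<Longrightarrow> cat_dom B b \<in> I \<Longrightarrow> cat_cod B b \<in> I"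
  shows "is_lens B (twin_cat B I) (twin_lens t I B)"
  using assms category_twin_cat[OF assms]
  unfolding is_lens_def is_functor_def twin_cat_def twin_lens_def
  by (auto simp: cat_dom_in_obj cat_cod_in_obj cat_id_in_mor cat_dom_id cat_comp_in_mor
      cat_dom_comp cat_cod_comp)

lemma lens_eq_twin_lens_comp:
  assumes "is_lens A B F" "get_obj F ` cat_obj A \<subseteq> I"
  shows "lens_eq A (twin_cat B I) (lens_comp (twin_lens False I B) F) (lens_comp (twin_lens True I B) F)"
  using assms
  by (auto simp: lens_eq_def lens_comp_def twin_lens_def lens_dom_get_mor lens_category_dom
      cat_dom_in_obj)

lemma lens_image_closed_cod:
  assumes "is_lens A B F" "b \<in> cat_mor B" "cat_dom B b \<in> get_obj F ` cat_obj A"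
  shows "cat_cod B b \<in> get_obj F ` cat_obj A"
proof -
  obtain x where "x \<in> cat_obj A" "cat_dom B b = get_obj F x" using assms(3) by auto
  then have "cat_cod A (put F x b) \<in> cat_obj A" "get_obj F (cat_cod A (put F x b)) = cat_cod B b"
    using assms(1,2) by (simp_all add: lens_cod_put_in_obj lens_get_obj_cod_put)
  then show ?thesis by (metis image_eqI)
qed

lemma lens_epi_surj_obj:
  fixes A :: "('ao, 'am) cat" and B :: "('bo, 'bm) cat" and F :: "('ao, 'am, 'bo, 'bm) lens"
  assumes "lens_epi A B F"
  shows "get_obj F ` cat_obj A = cat_obj B"
proof -
  let ?I = "get_obj F ` cat_obj A"
  have F: "is_lens A B F" using assms by (simp add: lens_epi_def)
  let ?eo = "pair_code (Inl \<circ> of_bool) (Inr \<circ> Inr \<circ> Inr \<circ> Inl)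
    :: bool \<times> 'bo \<Rightarrow> ('ao, 'am, 'bo, 'bm) univ"
  let ?em = "pair_code (Inl \<circ> of_bool) (Inr \<circ> Inr \<circ> Inr \<circ> Inr)
    :: bool \<times> 'bm \<Rightarrow> ('ao, 'am, 'bo, 'bm) univ"
  have "inj (of_bool :: bool \<Rightarrow> nat)" by (rule injI) (simp add: of_bool_eq_iff)
  then have inj: "inj ?eo" "inj ?em"
    by (intro inj_pair_code inj_compose inj_Inl inj_Inr; assumption)+
  have twin: "is_lens B (twin_cat B ?I) (twin_lens t ?I B)" for t
    by (rule is_lens_twin_lens[OF lens_category_cod[OF F] lens_image_closed_cod[OF F]])
  have "lens_eq B (twin_cat B ?I) (twin_lens False ?I B) (twin_lens True ?I B)"
    by (rule lens_epi_cancel[OF assms inj twin twin lens_eq_twin_lens_comp[OF F order.refl]])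
  then have "get_obj (twin_lens False ?I B) y = get_obj (twin_lens True ?I B) y"
    if "y \<in> cat_obj B" for y
    using that unfolding lens_eq_def by blast
  then have "cat_obj B \<subseteq> ?I" by (auto simp: twin_lens_def)
  then show ?thesis using lens_get_obj_in_obj[OF F] by blast
qed

lemma lens_put_dom_get_mor:
  assumes "is_lens A B F" "inj_on (get_mor F) (cat_mor A)" "a \<in> cat_mor A"
  shows "put F (cat_dom A a) (get_mor F a) = a"
proof -
  have "cat_dom A a \<in> cat_obj A" "get_mor F a \<in> cat_mor B"
    "cat_dom B (get_mor F a) = get_obj F (cat_dom A a)"
    using assms
    by (simp_all add: cat_dom_in_obj lens_category_dom lens_get_mor_in_mor lens_dom_get_mor)
  then have "put F (cat_dom A a) (get_mor F a) \<in> cat_mor A"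
    "get_mor F (put F (cat_dom A a) (get_mor F a)) = get_mor F a"
    using assms(1) by (simp_all add: lens_put_in_mor lens_get_put)
  then show ?thesis using assms(2,3) by (simp add: inj_on_eq_iff)
qed

definition inverse_lens ::
    "('ao, 'am) cat \<Rightarrow> ('bo, 'bm) cat \<Rightarrow> ('ao, 'am, 'bo, 'bm) lens \<Rightarrow> ('bo, 'bm, 'ao, 'am) lens" where
  "inverse_lens A B F = \<lparr> get_obj = inv_into (cat_obj A) (get_obj F),
     get_mor = (\<lambda>b. put F (inv_into (cat_obj A) (get_obj F) (cat_dom B b)) b),
     put = (\<lambda>_ a. get_mor F a) \<rparr>"

lemma get_mor_inverse_lens:
  "get_mor (inverse_lens A B F) b = put F (get_obj (inverse_lens A B F) (cat_dom B b)) b"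
  by (simp add: inverse_lens_def)

lemma put_inverse_lens: "put (inverse_lens A B F) y a = get_mor F a"
  by (simp add: inverse_lens_def)

context
  fixes A :: "('ao, 'am) cat" and B :: "('bo, 'bm) cat" and F :: "('ao, 'am, 'bo, 'bm) lens"
  assumes lens: "is_lens A B F"
    and bij_obj: "bij_betw (get_obj F) (cat_obj A) (cat_obj B)"
    and inj_mor: "inj_on (get_mor F) (cat_mor A)"
begin

lemma
  assumes "y \<in> cat_obj B"
  shows inverse_lens_obj_in_obj: "get_obj (inverse_lens A B F) y \<in> cat_obj A"
    and get_obj_inverse_lens_right: "get_obj F (get_obj (inverse_lens A B F) y) = y"
  using assms bij_betw_apply[OF bij_betw_inv_into[OF bij_obj]]
    bij_betw_inv_into_right[OF bij_obj]
  by (simp_all add: inverse_lens_def)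

lemma get_obj_inverse_lens_left:
  "x \<in> cat_obj A \<Longrightarrow> get_obj (inverse_lens A B F) (get_obj F x) = x"
  using bij_obj by (simp add: inverse_lens_def bij_betw_inv_into_left)

lemma
  assumes "b \<in> cat_mor B"
  shows inverse_lens_mor_in_mor: "get_mor (inverse_lens A B F) b \<in> cat_mor A"
    and dom_inverse_lens_mor:
      "cat_dom A (get_mor (inverse_lens A B F) b) = get_obj (inverse_lens A B F) (cat_dom B b)"
    and cod_inverse_lens_mor:
      "cat_cod A (get_mor (inverse_lens A B F) b) = get_obj (inverse_lens A B F) (cat_cod B b)"
    and get_mor_inverse_lens_right: "get_mor F (get_mor (inverse_lens A B F) b) = b"
proof -
  let ?x = "get_obj (inverse_lens A B F) (cat_dom B b)"
  have x: "?x \<in> cat_obj A" "cat_dom B b = get_obj F ?x"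
    using assms cat_dom_in_obj[OF lens_category_cod[OF lens]]
    by (simp_all add: inverse_lens_obj_in_obj get_obj_inverse_lens_right)
  have lift: "get_mor (inverse_lens A B F) b = put F ?x b" by (rule get_mor_inverse_lens)
  show "get_mor (inverse_lens A B F) b \<in> cat_mor A"
    and "cat_dom A (get_mor (inverse_lens A B F) b) = ?x"
    and "get_mor F (get_mor (inverse_lens A B F) b) = b"
    unfolding lift using lens assms x by (simp_all add: lens_put_in_mor lens_dom_put lens_get_put)
  have "get_obj (inverse_lens A B F) (get_obj F (cat_cod A (put F ?x b))) =
      cat_cod A (put F ?x b)"
    using lens assms x by (simp add: get_obj_inverse_lens_left lens_cod_put_in_obj)
  then show "cat_cod A (get_mor (inverse_lens A B F) b) =
      get_obj (inverse_lens A B F) (cat_cod B b)"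
    unfolding lift using lens assms x by (simp add: lens_get_obj_cod_put)
qed

lemma is_lens_inverse_lens: "is_lens B A (inverse_lens A B F)"
  unfolding is_lens_def is_functor_def
proof (intro conjI ballI impI)
  let ?G = "inverse_lens A B F"
  note cat_B = lens_category_cod[OF lens]
  show "category B" "category A" by (fact cat_B, fact lens_category_dom[OF lens])
  show "get_obj ?G y \<in> cat_obj A" if "y \<in> cat_obj B" for y
    using that by (rule inverse_lens_obj_in_obj)
  show "get_mor ?G b \<in> cat_mor A"
    and "cat_dom A (get_mor ?G b) = get_obj ?G (cat_dom B b)"
    and "cat_cod A (get_mor ?G b) = get_obj ?G (cat_cod B b)" if "b \<in> cat_mor B" for b
    using that
    by (rule inverse_lens_mor_in_mor, rule dom_inverse_lens_mor, rule cod_inverse_lens_mor)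
  show "get_mor ?G (cat_id B y) = cat_id A (get_obj ?G y)" if "y \<in> cat_obj B" for y
    using that lens_put_id[OF lens inverse_lens_obj_in_obj[OF that]]
    by (simp add: get_mor_inverse_lens cat_dom_id[OF cat_B] get_obj_inverse_lens_right)
  show "get_mor ?G (cat_comp B h f) = cat_comp A (get_mor ?G h) (get_mor ?G f)"
    if f: "f \<in> cat_mor B" and h: "h \<in> cat_mor B" and fh: "cat_cod B f = cat_dom B h" for f h
  proof -
    let ?x = "get_obj ?G (cat_dom B f)"
    have x: "?x \<in> cat_obj A" "cat_dom B f = get_obj F ?x"
      using f cat_dom_in_obj[OF cat_B]
      by (simp_all add: inverse_lens_obj_in_obj get_obj_inverse_lens_right)
    have cod: "cat_cod A (put F ?x f) = get_obj ?G (cat_dom B h)"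
      using cod_inverse_lens_mor[OF f] fh by (simp add: get_mor_inverse_lens)
    have "get_mor ?G (cat_comp B h f) = put F ?x (cat_comp B h f)"
      using f h fh by (simp add: get_mor_inverse_lens cat_dom_comp[OF cat_B])
    also have "\<dots> = cat_comp A (put F (get_obj ?G (cat_dom B h)) h) (put F ?x f)"
      using lens_put_comp[OF lens x(1) f h x(2)] cod
        get_obj_inverse_lens_right[OF cat_dom_in_obj[OF cat_B h]] by simp
    finally show ?thesis by (simp add: get_mor_inverse_lens)
  qed
  show "put ?G y a \<in> cat_mor B" "cat_dom B (put ?G y a) = y" "get_mor ?G (put ?G y a) = a"
    if y: "y \<in> cat_obj B" and a: "a \<in> cat_mor A" and dom_a: "cat_dom A a = get_obj ?G y"
    for y a
  proof -
    have "cat_dom B (get_mor F a) = y"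
      using lens a dom_a y by (simp add: lens_dom_get_mor get_obj_inverse_lens_right)
    then show "put ?G y a \<in> cat_mor B" "cat_dom B (put ?G y a) = y" "get_mor ?G (put ?G y a) = a"
      using lens a dom_a inj_mor
      by (simp_all add: put_inverse_lens get_mor_inverse_lens lens_get_mor_in_mor
          lens_put_dom_get_mor flip: dom_a)
  qed
  show "put ?G y (cat_id A (get_obj ?G y)) = cat_id B y" if "y \<in> cat_obj B" for y
    using that lens
    by (simp add: put_inverse_lens lens_get_mor_id inverse_lens_obj_in_obj
        get_obj_inverse_lens_right)
  show "put ?G y (cat_comp A a' a) = cat_comp B (put ?G (cat_cod B (put ?G y a)) a') (put ?G y a)"
    if "a \<in> cat_mor A" "a' \<in> cat_mor A"
      "cat_dom A a' = get_obj ?G (cat_cod B (put ?G y a))" for y a a'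
  proof -
    have "cat_cod A a = cat_dom A a'"
      using that lens
      by (simp add: put_inverse_lens lens_cod_get_mor get_obj_inverse_lens_left cat_cod_in_obj
          lens_category_dom)
    then show ?thesis using that lens by (simp add: put_inverse_lens lens_get_mor_comp)
  qed
qed

lemma lens_eq_inverse_lens_comp_left: "lens_eq A A (lens_comp (inverse_lens A B F) F) id_lens"
  using lens inj_mor
  by (auto simp: lens_eq_def lens_comp_def id_lens_def get_obj_inverse_lens_left
      get_mor_inverse_lens put_inverse_lens lens_dom_get_mor lens_put_dom_get_mor
      lens_category_dom cat_dom_in_obj)

lemma lens_eq_inverse_lens_comp_right: "lens_eq B B (lens_comp F (inverse_lens A B F)) id_lens"
  by (auto simp: lens_eq_def lens_comp_def id_lens_def get_obj_inverse_lens_right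
      get_mor_inverse_lens_right put_inverse_lens simp flip: get_mor_inverse_lens)

lemma lens_iso_if_bij_obj_inj_mor: "lens_iso A B F"
  unfolding lens_iso_def
  using lens is_lens_inverse_lens lens_eq_inverse_lens_comp_left lens_eq_inverse_lens_comp_right
  by blast

end

theorem corollary5p9:
  fixes A :: "('ao, 'am) cat" and B :: "('bo, 'bm) cat" and F :: "('ao, 'am, 'bo, 'bm) lens"
  assumes "lens_epi A B F" and "lens_mono A B F"
  shows "lens_iso A B F"
proof (rule lens_iso_if_bij_obj_inj_mor)
  show "is_lens A B F" using assms(2) by (simp add: lens_mono_def)
  show "bij_betw (get_obj F) (cat_obj A) (cat_obj B)"
    using lens_mono_inj_on_obj[OF assms(2)] lens_epi_surj_obj[OF assms(1)]
    by (simp add: bij_betw_def)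
  show "inj_on (get_mor F) (cat_mor A)" using assms(2) by (rule lens_mono_inj_on_mor)
qed

end
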